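(* Fix $\gamma\in(0,1)$ and set $\alpha^{\oplus}=\sqrt{\frac{1+\sqrt{1-\gamma}}{2\pi^2}}$, $\alpha^{\ominus}=\sqrt{\frac{1-\sqrt{1-\gamma}}{2\pi^2}}$. For $\varepsilon>0$ let $\Lambda=\{k\in\mathbb{N}:\lceil\alpha^{\ominus}/\varepsilon\rceil\le k\le\lfloor\alpha^{\oplus}/\varepsilon\rfloor\}$, let $(c_k)_{k\in\Lambda}$ be independent standard normal random variables, and define $f(x)=\sum_{k\in\Lambda}c_k\sqrt{2}\cos(k\pi x)$ for $x\in[0,1]$. Then for any choice of $p>1$ and $\delta>0$ there exists a constant $C>0$ such that for all $0<\varepsilon\le1$, $$\Big(\mathbb{E}\|f\|_{L^\infty(0,1)}^p\Big)^{1/p}\le C\varepsilon^{-\delta/2}\Big(\mathbb{E}\|f\|_{L^2(0,1)}^2\Big)^{1/2}=C\varepsilon^{-(1+\delta)/2}.$$ *)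

theory Defs
  imports "HOL-Probability.Probability"
begin

definition alpha_plus :: "real \<Rightarrow> real" where
  "alpha_plus \<gamma> = sqrt ((1 + sqrt (1 - \<gamma>)) / (2 * pi\<^sup>2))"

definition alpha_minus :: "real \<Rightarrow> real" where
  "alpha_minus \<gamma> = sqrt ((1 - sqrt (1 - \<gamma>)) / (2 * pi\<^sup>2))"

definition Lam :: "real \<Rightarrow> real \<Rightarrow> nat set" where
  "Lam \<gamma> \<epsilon> = {k. \<lceil>alpha_minus \<gamma> / \<epsilon>\<rceil> \<le> int k \<and> int k \<le> \<lfloor>alpha_plus \<gamma> / \<epsilon>\<rfloor>}"

definition rand_f :: "real \<Rightarrow> real \<Rightarrow> (nat \<Rightarrow> 'a \<Rightarrow> real) \<Rightarrow> 'a \<Rightarrow> real \<Rightarrow> real" where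
  "rand_f \<gamma> \<epsilon> c \<omega> x = (\<Sum>k\<in>Lam \<gamma> \<epsilon>. c k \<omega> * sqrt 2 * cos (real k * pi * x))"

text \<open>Sup norm on (0,1) (equals the L-infinity norm for continuous functions).\<close>
definition Linf01 :: "(real \<Rightarrow> real) \<Rightarrow> real" where
  "Linf01 g = (SUP x\<in>{0<..<1}. \<bar>g x\<bar>)"

definition L2_01 :: "(real \<Rightarrow> real) \<Rightarrow> real" where
  "L2_01 g = sqrt (LBINT x=0..1. (g x)\<^sup>2)"

end

theory Submission
  imports Defs
begin

text \<open>
  All frequencies in the window are at most \<open>1/\<epsilon>\<close> and there are at most \<open>1/\<epsilon>\<close> of them,
  so \<open>f\<close> is Lipschitz with constant of order \<open>\<Sum>k. \<bar>c k\<bar> / \<epsilon>\<close>, and its sup norm is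
  controlled by its values on the grid \<open>j/n\<close>, \<open>n = \<lceil>1/\<epsilon>\<^sup>2\<rceil>\<close>, up to an error of order
  \<open>\<epsilon> \<Sum>k. \<bar>c k\<bar>\<close>. Each grid value is a centred Gaussian of variance at most \<open>2 |\<Lambda>|\<close>, so
  the \<open>2m\<close>-th moment of the sup norm is of order \<open>|\<Lambda>|^m / \<epsilon>\<^sup>2\<close>. Its \<open>2m\<close>-th root turns
  the number of grid points into a factor \<open>\<epsilon> powr (-1/m)\<close>, which is at most
  \<open>\<epsilon> powr (-\<delta>/2)\<close> once \<open>m \<ge> 2/\<delta>\<close>. Moments of order \<open>p \<le> 2m\<close> follow by truncation,
  and \<open>E \<parallel>f\<parallel>\<^sub>2\<^sup>2 = |\<Lambda>| \<le> 1/\<epsilon>\<close> by orthonormality of \<open>sqrt 2 * cos (k\<pi>x)\<close>.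
\<close>

definition cosine_sum :: "nat set \<Rightarrow> (nat \<Rightarrow> real) \<Rightarrow> real \<Rightarrow> real" where
  "cosine_sum L b x = (\<Sum>k\<in>L. b k * sqrt 2 * cos (real k * pi * x))"

lemma rand_f_eq_cosine_sum: "rand_f \<gamma> \<epsilon> c \<omega> = cosine_sum (Lam \<gamma> \<epsilon>) (\<lambda>k. c k \<omega>)"
  by (simp add: rand_f_def cosine_sum_def fun_eq_iff)

lemma has_integral_cos_int_multiple:
  fixes n :: int assumes "n \<noteq> 0"
  shows "((\<lambda>x. cos (real_of_int n * pi * x)) has_integral 0) {0..1}"
proof -
  have "((\<lambda>x. cos (real_of_int n * pi * x)) has_integral
      sin (real_of_int n * pi * 1) / (real_of_int n * pi) - sin (real_of_int n * pi * 0) / (real_of_int n * pi)) {0..1}"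
    using assms
    by (intro fundamental_theorem_of_calculus)
       (auto intro!: derivative_eq_intros simp: has_real_derivative_iff_has_vector_derivative[symmetric])
  moreover have "sin (real_of_int n * pi) = 0" by (simp add: sin_int_times_real mult.commute)
  ultimately show ?thesis by simp
qed

lemma has_integral_cos_times_cos:
  fixes k j :: nat assumes "1 \<le> k" "1 \<le> j"
  shows "((\<lambda>x. 2 * cos (real k * pi * x) * cos (real j * pi * x)) has_integral (if k = j then 1 else 0)) {0..1}"
proof -
  have product_to_sum: "2 * cos (real k * pi * x) * cos (real j * pi * x)
      = cos (real_of_int (int k - int j) * pi * x) + cos (real_of_int (int k + int j) * pi * x)" for x
    by (simp add: cos_add cos_diff algebra_simps)
  have sum_freq: "((\<lambda>x. cos (real_of_int (int k + int j) * pi * x)) has_integral 0) {0..1}"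
    using assms by (intro has_integral_cos_int_multiple) auto
  show ?thesis
  proof (cases "k = j")
    case True
    have "((\<lambda>x. 1 + cos (real_of_int (int k + int j) * pi * x)) has_integral 1 + 0) {0..1}"
      using has_integral_const_real[of "1::real" 0 1] by (intro has_integral_add sum_freq) simp
    then show ?thesis using True product_to_sum by simp
  next
    case False
    have "((\<lambda>x. cos (real_of_int (int k - int j) * pi * x)) has_integral 0) {0..1}"
      using False by (intro has_integral_cos_int_multiple) auto
    from has_integral_add[OF this sum_freq] show ?thesis using False by (simp add: product_to_sum)
  qed
qed

lemma has_integral_cosine_sum_square:
  assumes "finite L" "\<And>k. k \<in> L \<Longrightarrow> 1 \<le> k"
  shows "((\<lambda>x. (cosine_sum L b x)\<^sup>2) has_integral (\<Sum>k\<in>L. (b k)\<^sup>2)) {0..1}"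
proof -
  have expand: "(cosine_sum L b x)\<^sup>2
     = (\<Sum>k\<in>L. \<Sum>j\<in>L. b k * b j * (2 * cos (real k * pi * x) * cos (real j * pi * x)))" for x
  proof -
    have sqrt2_twice: "sqrt 2 * (sqrt 2 * y) = 2 * y" for y by (simp add: mult.assoc[symmetric])
    show ?thesis by (simp add: cosine_sum_def power2_eq_square sum_product algebra_simps sqrt2_twice)
  qed
  have "((\<lambda>x. \<Sum>k\<in>L. \<Sum>j\<in>L. b k * b j * (2 * cos (real k * pi * x) * cos (real j * pi * x)))
     has_integral (\<Sum>k\<in>L. \<Sum>j\<in>L. b k * b j * (if k = j then 1 else 0))) {0..1}"
    using assms by (intro has_integral_sum has_integral_mult_right has_integral_cos_times_cos) auto
  moreover have "(\<Sum>k\<in>L. \<Sum>j\<in>L. b k * b j * (if k = j then 1 else 0)) = (\<Sum>k\<in>L. (b k)\<^sup>2)"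
    using assms(1) by (simp add: power2_eq_square if_distrib sum.delta cong: if_cong)
  ultimately show ?thesis by (simp add: expand)
qed

lemma L2_01_cosine_sum:
  assumes "finite L" "\<And>k. k \<in> L \<Longrightarrow> 1 \<le> k"
  shows "(L2_01 (cosine_sum L b))\<^sup>2 = (\<Sum>k\<in>L. (b k)\<^sup>2)"
proof -
  let ?g = "\<lambda>x. (cosine_sum L b x)\<^sup>2"
  have "continuous_on {0..1} ?g" by (simp add: cosine_sum_def continuous_intros)
  then have "(LBINT x=0..1. ?g x) = integral {0..1} ?g"
    using interval_integral_eq_integral[of 0 1 ?g] borel_integrable_atLeastAtMost'[of 0 1 ?g]
    by (simp add: zero_ereal_def one_ereal_def)
  also have "\<dots> = (\<Sum>k\<in>L. (b k)\<^sup>2)"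
    using has_integral_cosine_sum_square[OF assms] by (rule integral_unique)
  finally show ?thesis unfolding L2_01_def by (simp add: sum_nonneg)
qed

lemma abs_cos_diff_le: "\<bar>cos u - cos v\<bar> \<le> \<bar>u - v\<bar>" for u v :: real
proof -
  have "\<bar>cos u - cos v\<bar> = 2 * \<bar>sin ((u + v) / 2)\<bar> * \<bar>sin ((v - u) / 2)\<bar>"
    by (simp add: cos_diff_cos abs_mult)
  also have "\<dots> \<le> 2 * 1 * \<bar>(v - u) / 2\<bar>"
    by (intro mult_mono abs_sin_x_le_abs_x) auto
  finally show ?thesis by simp
qed

lemma cosine_sum_lipschitz:
  assumes "\<And>k. k \<in> L \<Longrightarrow> real k \<le> K"
  shows "\<bar>cosine_sum L b x - cosine_sum L b y\<bar> \<le> sqrt 2 * pi * K * (\<Sum>k\<in>L. \<bar>b k\<bar>) * \<bar>x - y\<bar>"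
proof -
  have "\<bar>cosine_sum L b x - cosine_sum L b y\<bar>
      = \<bar>\<Sum>k\<in>L. b k * sqrt 2 * (cos (real k * pi * x) - cos (real k * pi * y))\<bar>"
    by (simp add: cosine_sum_def sum_subtractf[symmetric] algebra_simps)
  also have "\<dots> \<le> (\<Sum>k\<in>L. \<bar>b k\<bar> * (sqrt 2 * (K * pi * \<bar>x - y\<bar>)))"
  proof (rule order_trans[OF sum_abs sum_mono])
    fix k assume "k \<in> L"
    have "\<bar>cos (real k * pi * x) - cos (real k * pi * y)\<bar> \<le> \<bar>real k * pi * x - real k * pi * y\<bar>"
      by (rule abs_cos_diff_le)
    also have "\<dots> = real k * pi * \<bar>x - y\<bar>" by (simp add: abs_mult right_diff_distrib[symmetric])
    also have "\<dots> \<le> K * pi * \<bar>x - y\<bar>" using assms[OF \<open>k \<in> L\<close>] by (intro mult_right_mono) auto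
    finally show "\<bar>b k * sqrt 2 * (cos (real k * pi * x) - cos (real k * pi * y))\<bar>
        \<le> \<bar>b k\<bar> * (sqrt 2 * (K * pi * \<bar>x - y\<bar>))"
      by (auto simp: abs_mult mult.assoc intro!: mult_left_mono)
  qed
  also have "\<dots> = (\<Sum>k\<in>L. \<bar>b k\<bar>) * (sqrt 2 * (K * pi * \<bar>x - y\<bar>))"
    by (rule sum_distrib_right[symmetric])
  finally show ?thesis by (simp add: mult_ac)
qed

lemma Linf01_pow_le:
  assumes "1 \<le> q" and bound: "\<And>x. x \<in> {0<..<1} \<Longrightarrow> \<bar>F x\<bar> ^ q \<le> H"
  shows "0 \<le> Linf01 F" and "Linf01 F ^ q \<le> H"
proof -
  have "0 \<le> \<bar>F (1/2)\<bar> ^ q" by simp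
  also have "\<dots> \<le> H" by (rule bound) auto
  finally have H: "0 \<le> H" .
  have root_bound: "\<bar>F x\<bar> \<le> root q H" if "x \<in> {0<..<1}" for x
    using real_root_le_mono[OF _ bound[OF that], of q] assms(1) by (simp add: real_root_power_cancel)
  then have "bdd_above ((\<lambda>x. \<bar>F x\<bar>) ` {0<..<1})" by (intro bdd_aboveI2) auto
  then have "\<bar>F (1/2)\<bar> \<le> Linf01 F" unfolding Linf01_def by (intro cSUP_upper) auto
  then show nonneg: "0 \<le> Linf01 F" by linarith
  have "Linf01 F \<le> root q H" unfolding Linf01_def using root_bound by (intro cSUP_least) auto
  then have "Linf01 F ^ q \<le> root q H ^ q" using nonneg by (intro power_mono)
  also have "\<dots> = H" using assms(1) H by simp
  finally show "Linf01 F ^ q \<le> H" .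
qed

lemma grid_point_near:
  assumes "1 \<le> n" "x \<in> {0..1}"
  obtains j where "j \<le> n" "\<bar>x - real j / real n\<bar> \<le> 1 / real n"
proof
  define j where "j = nat \<lfloor>x * real n\<rfloor>"
  have "0 \<le> x * real n" "x * real n \<le> real n" using assms by (auto simp: mult_left_le_one_le)
  then have "real j \<le> x * real n" "x * real n < real j + 1" "j \<le> n"
    by (auto simp: j_def nat_le_iff floor_le_iff)
  then show "j \<le> n" by simp
  have "x - real j / real n = (x * real n - real j) / real n" using assms(1) by (simp add: field_simps)
  with \<open>real j \<le> x * real n\<close> \<open>x * real n < real j + 1\<close>
  show "\<bar>x - real j / real n\<bar> \<le> 1 / real n" by (simp add: divide_right_mono)
qed

lemma power_add_le: "0 \<le> a \<Longrightarrow> 0 \<le> b \<Longrightarrow> (a + b) ^ n \<le> 2 ^ n * (a ^ n + b ^ n)"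
  for a b :: real
proof -
  assume "0 \<le> a" "0 \<le> b"
  then have "(a + b) ^ n \<le> (2 * max a b) ^ n" by (intro power_mono) auto
  also have "\<dots> = 2 ^ n * max a b ^ n" by (simp add: power_mult_distrib)
  also have "max a b ^ n \<le> a ^ n + b ^ n" using \<open>0 \<le> a\<close> \<open>0 \<le> b\<close> by (auto simp: max_def)
  finally show ?thesis by simp
qed

lemma Linf01_pow_le_grid:
  fixes F :: "real \<Rightarrow> real"
  assumes "1 \<le> n" "1 \<le> q" "0 \<le> C"
    and lip: "\<And>x y. x \<in> {0..1} \<Longrightarrow> y \<in> {0..1} \<Longrightarrow> \<bar>F x - F y\<bar> \<le> C * \<bar>x - y\<bar>"
  shows "0 \<le> Linf01 F"
    and "Linf01 F ^ q \<le> 2 ^ q * ((\<Sum>j\<le>n. \<bar>F (real j / real n)\<bar> ^ q) + (C / real n) ^ q)"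
proof -
  have "\<bar>F x\<bar> ^ q \<le> 2 ^ q * ((\<Sum>j\<le>n. \<bar>F (real j / real n)\<bar> ^ q) + (C / real n) ^ q)"
    if "x \<in> {0<..<1}" for x
  proof -
    from that have "x \<in> {0..1}" by auto
    then obtain j where j: "j \<le> n" "\<bar>x - real j / real n\<bar> \<le> 1 / real n"
      using grid_point_near[OF assms(1)] by blast
    have "real j / real n \<in> {0..1}" using j(1) assms(1) by auto
    then have "\<bar>F x - F (real j / real n)\<bar> \<le> C * \<bar>x - real j / real n\<bar>"
      using that by (intro lip) auto
    also have "\<dots> \<le> C * (1 / real n)" using j(2) assms(3) by (rule mult_left_mono)
    finally have "\<bar>F x\<bar> \<le> \<bar>F (real j / real n)\<bar> + C / real n" by simp
    then have "\<bar>F x\<bar> ^ q \<le> (\<bar>F (real j / real n)\<bar> + C / real n) ^ q"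
      by (intro power_mono) auto
    also have "\<dots> \<le> 2 ^ q * (\<bar>F (real j / real n)\<bar> ^ q + (C / real n) ^ q)"
      using assms(3) by (intro power_add_le) auto
    also have "\<bar>F (real j / real n)\<bar> ^ q \<le> (\<Sum>j\<le>n. \<bar>F (real j / real n)\<bar> ^ q)"
      using j(1) by (intro member_le_sum) auto
    finally show ?thesis by simp
  qed
  then show "0 \<le> Linf01 F"
    and "Linf01 F ^ q \<le> 2 ^ q * ((\<Sum>j\<le>n. \<bar>F (real j / real n)\<bar> ^ q) + (C / real n) ^ q)"
    using Linf01_pow_le[OF assms(2)] by blast+
qed

lemma sum_abs_power_le:
  fixes b :: "'i \<Rightarrow> real"
  assumes "finite L" "1 \<le> q"
  shows "(\<Sum>k\<in>L. \<bar>b k\<bar>) ^ q \<le> real (card L) ^ q * (\<Sum>k\<in>L. \<bar>b k\<bar> ^ q)"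
proof (cases "L = {}")
  case True
  then show ?thesis using assms by (simp add: power_0_left)
next
  case False
  define B where "B = Max ((\<lambda>k. \<bar>b k\<bar>) ` L)"
  have "B \<in> (\<lambda>k. \<bar>b k\<bar>) ` L"
    unfolding B_def using assms False by (intro Max_in) auto
  then obtain k0 where "k0 \<in> L" "B = \<bar>b k0\<bar>" by blast
  moreover have "\<bar>b k\<bar> \<le> B" if "k \<in> L" for k
    unfolding B_def using assms(1) that by (intro Max_ge) auto
  ultimately have k0: "k0 \<in> L" "\<And>k. k \<in> L \<Longrightarrow> \<bar>b k\<bar> \<le> \<bar>b k0\<bar>" by auto
  have "(\<Sum>k\<in>L. \<bar>b k\<bar>) \<le> real (card L) * \<bar>b k0\<bar>"
    using sum_mono[of L "\<lambda>k. \<bar>b k\<bar>" "\<lambda>_. \<bar>b k0\<bar>"] k0 by simp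
  then have "(\<Sum>k\<in>L. \<bar>b k\<bar>) ^ q \<le> (real (card L) * \<bar>b k0\<bar>) ^ q"
    by (intro power_mono) (auto intro: sum_nonneg)
  also have "\<dots> \<le> real (card L) ^ q * (\<Sum>k\<in>L. \<bar>b k\<bar> ^ q)"
    unfolding power_mult_distrib using assms k0 by (intro mult_left_mono member_le_sum) auto
  finally show ?thesis .
qed

lemma Linf01_cosine_sum_pow_le:
  fixes m :: nat
  assumes "finite L" "\<And>k. k \<in> L \<Longrightarrow> real k \<le> K" "0 \<le> K" "1 \<le> n" "1 \<le> m"
  shows "0 \<le> Linf01 (cosine_sum L b)"
    and "Linf01 (cosine_sum L b) ^ (2 * m) \<le> 4 ^ m *
           ((\<Sum>j\<le>n. cosine_sum L b (real j / real n) ^ (2 * m))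
            + (sqrt 2 * pi * K * real (card L) / real n) ^ (2 * m) * (\<Sum>k\<in>L. b k ^ (2 * m)))"
proof -
  define S where "S = sqrt 2 * pi * K / real n"
  have lip: "\<bar>cosine_sum L b x - cosine_sum L b y\<bar> \<le> (sqrt 2 * pi * K * (\<Sum>k\<in>L. \<bar>b k\<bar>)) * \<bar>x - y\<bar>"
    for x y using assms(2) by (rule cosine_sum_lipschitz)
  have lip_nonneg: "0 \<le> sqrt 2 * pi * K * (\<Sum>k\<in>L. \<bar>b k\<bar>)"
    using assms(3) by (simp add: sum_nonneg)
  note grid = Linf01_pow_le_grid[OF assms(4) _ lip_nonneg lip, of "2 * m"]
  show "0 \<le> Linf01 (cosine_sum L b)" using grid assms(5) by simp
  have "(sqrt 2 * pi * K * (\<Sum>k\<in>L. \<bar>b k\<bar>) / real n) ^ (2 * m) = S ^ (2 * m) * (\<Sum>k\<in>L. \<bar>b k\<bar>) ^ (2 * m)"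
    by (simp add: S_def power_mult_distrib[symmetric])
  also have "\<dots> \<le> S ^ (2 * m) * (real (card L) ^ (2 * m) * (\<Sum>k\<in>L. \<bar>b k\<bar> ^ (2 * m)))"
    using assms(1,3,5) sum_abs_power_le[OF assms(1), of "2 * m" b]
    by (intro mult_left_mono) (auto simp: S_def)
  also have "\<dots> = (sqrt 2 * pi * K * real (card L) / real n) ^ (2 * m) * (\<Sum>k\<in>L. b k ^ (2 * m))"
    by (simp add: S_def power_mult_distrib[symmetric] power_even_abs mult_ac)
  finally have tail: "(sqrt 2 * pi * K * (\<Sum>k\<in>L. \<bar>b k\<bar>) / real n) ^ (2 * m)
      \<le> (sqrt 2 * pi * K * real (card L) / real n) ^ (2 * m) * (\<Sum>k\<in>L. b k ^ (2 * m))" .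
  have "Linf01 (cosine_sum L b) ^ (2 * m) \<le> 2 ^ (2 * m) *
      ((\<Sum>j\<le>n. \<bar>cosine_sum L b (real j / real n)\<bar> ^ (2 * m))
       + (sqrt 2 * pi * K * (\<Sum>k\<in>L. \<bar>b k\<bar>) / real n) ^ (2 * m))"
    using grid assms(5) by simp
  also have "\<dots> \<le> 2 ^ (2 * m) *
      ((\<Sum>j\<le>n. \<bar>cosine_sum L b (real j / real n)\<bar> ^ (2 * m))
       + (sqrt 2 * pi * K * real (card L) / real n) ^ (2 * m) * (\<Sum>k\<in>L. b k ^ (2 * m)))"
    using tail by (intro mult_left_mono add_left_mono) auto
  finally show "Linf01 (cosine_sum L b) ^ (2 * m) \<le> 4 ^ m *
           ((\<Sum>j\<le>n. cosine_sum L b (real j / real n) ^ (2 * m))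
            + (sqrt 2 * pi * K * real (card L) / real n) ^ (2 * m) * (\<Sum>k\<in>L. b k ^ (2 * m)))"
    by (simp add: power_even_abs power_mult)
qed

text \<open>Splitting at the level \<open>B\<close> compares the \<open>p\<close>-th with the \<open>n\<close>-th moment without
  Lyapunov's inequality, and hence without integrability side conditions.\<close>

lemma powr_le_truncation:
  fixes x B p :: real
  assumes "0 \<le> x" "0 < B" "0 < p" "p \<le> real n"
  shows "x powr p \<le> B powr p + B powr (p - real n) * x ^ n"
proof (cases "x \<le> B")
  case True
  then have "x powr p \<le> B powr p" using assms by (intro powr_mono2) auto
  moreover have "0 \<le> B powr (p - real n) * x ^ n" using assms by simp
  ultimately show ?thesis by linarith
next
  case False
  then have "x powr p = x powr (p - real n) * x ^ n"
    using assms by (simp add: powr_realpow[symmetric] powr_add[symmetric])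
  also have "\<dots> \<le> B powr (p - real n) * x ^ n"
    using False assms by (intro mult_right_mono powr_mono2') auto
  finally show ?thesis by (smt (verit) powr_ge_zero)
qed

lemma (in prob_space) expectation_powr_root_le:
  assumes nonneg: "\<And>\<omega>. 0 \<le> X \<omega>" and major: "\<And>\<omega>. X \<omega> ^ n \<le> G \<omega>"
    and G: "integrable M G" "expectation G \<le> B ^ n"
    and "0 < B" "1 \<le> p" "p \<le> real n"
  shows "expectation (\<lambda>\<omega>. X \<omega> powr p) powr (1 / p) \<le> 2 * B"
proof -
  have "expectation (\<lambda>\<omega>. X \<omega> powr p) \<le> 2 * B powr p"
  proof (cases "integrable M (\<lambda>\<omega>. X \<omega> powr p)")
    case True
    have "expectation (\<lambda>\<omega>. X \<omega> powr p) \<le> expectation (\<lambda>\<omega>. B powr p + B powr (p - real n) * G \<omega>)"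
    proof (intro integral_mono True)
      show "X \<omega> powr p \<le> B powr p + B powr (p - real n) * G \<omega>" for \<omega>
        using powr_le_truncation[OF nonneg \<open>0 < B\<close>, of p n] major[of \<omega>] assms(6,7)
        by (smt (verit) mult_left_mono powr_ge_zero)
    qed (use G in simp)
    also have "\<dots> = B powr p + B powr (p - real n) * expectation G"
      using G by (simp add: prob_space)
    also have "\<dots> \<le> B powr p + B powr (p - real n) * B ^ n"
      using G by (intro add_left_mono mult_left_mono) auto
    also have "B powr (p - real n) * B ^ n = B powr p"
      using \<open>0 < B\<close> by (simp add: powr_diff powr_realpow[symmetric])
    finally show ?thesis by simp
  qed (use \<open>0 < B\<close> in \<open>simp add: not_integrable_integral_eq\<close>)
  then have "expectation (\<lambda>\<omega>. X \<omega> powr p) powr (1 / p) \<le> (2 * B powr p) powr (1 / p)"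
    using assms(6) nonneg by (intro powr_mono2 integral_nonneg_AE) auto
  also have "\<dots> = 2 powr (1 / p) * B" using \<open>0 < B\<close> assms(6) by (simp add: powr_mult powr_powr)
  also have "\<dots> \<le> 2 * B" using \<open>0 < B\<close> assms(6) powr_mono[of "1 / p" 1 2] by simp
  finally show ?thesis .
qed

definition std_normal_moment :: "nat \<Rightarrow> real" where
  "std_normal_moment m = fact (2 * m) / (2 ^ m * fact m)"

lemma std_normal_moment_pos: "0 < std_normal_moment m"
  by (simp add: std_normal_moment_def)

locale std_normal_family = prob_space +
  fixes c :: "nat \<Rightarrow> 'a \<Rightarrow> real" and I :: "nat set"
  assumes indep: "indep_vars (\<lambda>_. borel) c I"
    and std_normal: "k \<in> I \<Longrightarrow> distributed M lborel (c k) std_normal_density"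
begin

lemma even_moment:
  assumes "k \<in> I"
  shows "integrable M (\<lambda>\<omega>. c k \<omega> ^ (2 * m))"
    and "expectation (\<lambda>\<omega>. c k \<omega> ^ (2 * m)) = std_normal_moment m"
  using distributed_integrable[OF std_normal[OF assms], of "\<lambda>x. x ^ (2 * m)"]
    distributed_integral[OF std_normal[OF assms], of "\<lambda>x. x ^ (2 * m)"]
    integrable_std_normal_moment[of "2 * m"] integral_std_normal_moment_even[of m]
  by (simp_all add: std_normal_moment_def)

lemma linear_combination_normal:
  assumes "finite I" and nonzero: "\<exists>k\<in>I. a k \<noteq> 0"
  shows "distributed M lborel (\<lambda>\<omega>. \<Sum>k\<in>I. a k * c k \<omega>) (normal_density 0 (sqrt (\<Sum>k\<in>I. (a k)\<^sup>2)))"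
proof -
  \<comment> \<open>\<open>sum_indep_normal\<close> needs positive standard deviations.\<close>
  define I' where "I' = {k\<in>I. a k \<noteq> 0}"
  have "finite I'" "I' \<subseteq> I" "I' \<noteq> {}" using assms by (auto simp: I'_def)
  have "(\<Sum>k\<in>I. a k * c k \<omega>) = (\<Sum>k\<in>I'. a k * c k \<omega>)" for \<omega>
    using assms by (intro sum.mono_neutral_right) (auto simp: I'_def)
  moreover have "(\<Sum>k\<in>I. (a k)\<^sup>2) = (\<Sum>k\<in>I'. (a k)\<^sup>2)"
    using assms by (intro sum.mono_neutral_right) (auto simp: I'_def)
  moreover have "indep_vars (\<lambda>_. borel) (\<lambda>k \<omega>. a k * c k \<omega>) I'"
    using indep_vars_compose2[OF indep_vars_subset[OF indep \<open>I' \<subseteq> I\<close>], of "\<lambda>k x. a k * x" "\<lambda>_. borel"]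
    by simp
  moreover have "distributed M lborel (\<lambda>\<omega>. a k * c k \<omega>) (normal_density 0 \<bar>a k\<bar>)" if "k \<in> I'" for k
    using normal_density_affine[OF std_normal, of k "a k" 0] that by (simp add: I'_def)
  ultimately show ?thesis
    using sum_indep_normal[of I' "\<lambda>k \<omega>. a k * c k \<omega>" "\<lambda>k. \<bar>a k\<bar>" "\<lambda>_. 0"] \<open>finite I'\<close> \<open>I' \<noteq> {}\<close>
    by (simp add: I'_def)
qed

lemma linear_combination_even_moment:
  assumes "finite I"
  shows "integrable M (\<lambda>\<omega>. (\<Sum>k\<in>I. a k * c k \<omega>) ^ (2 * m))"
    and "expectation (\<lambda>\<omega>. (\<Sum>k\<in>I. a k * c k \<omega>) ^ (2 * m))
           = (\<Sum>k\<in>I. (a k)\<^sup>2) ^ m * std_normal_moment m"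
proof -
  have "integrable M (\<lambda>\<omega>. (\<Sum>k\<in>I. a k * c k \<omega>) ^ (2 * m)) \<and>
        expectation (\<lambda>\<omega>. (\<Sum>k\<in>I. a k * c k \<omega>) ^ (2 * m))
           = (\<Sum>k\<in>I. (a k)\<^sup>2) ^ m * std_normal_moment m"
  proof (cases "\<exists>k\<in>I. a k \<noteq> 0")
    case False
    then show ?thesis by (cases m) (simp_all add: prob_space std_normal_moment_def)
  next
    case True
    define \<sigma> where "\<sigma> = sqrt (\<Sum>k\<in>I. (a k)\<^sup>2)"
    have "0 < (\<Sum>k\<in>I. (a k)\<^sup>2)"
      using True assms by (metis sum_pos2 zero_le_power2 zero_less_power2)
    then have \<sigma>: "0 < \<sigma>" "\<sigma>\<^sup>2 = (\<Sum>k\<in>I. (a k)\<^sup>2)" by (simp_all add: \<sigma>_def)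
    have D: "distributed M lborel (\<lambda>\<omega>. \<Sum>k\<in>I. a k * c k \<omega>) (normal_density 0 \<sigma>)"
      unfolding \<sigma>_def using assms True by (rule linear_combination_normal)
    have moment: "has_bochner_integral lborel (\<lambda>x. normal_density 0 \<sigma> x * x ^ (2 * m))
        ((\<sigma>\<^sup>2) ^ m * std_normal_moment m)"
      using normal_moment_even[OF \<open>0 < \<sigma>\<close>, of 0 m] \<open>0 < \<sigma>\<close>
      by (simp add: std_normal_moment_def power_divide field_simps)
    show ?thesis
      using distributed_integrable[OF D, of "\<lambda>x. x ^ (2 * m)"] distributed_integral[OF D, of "\<lambda>x. x ^ (2 * m)"]
        moment \<sigma>(2) by (simp add: has_bochner_integral_iff)
  qed
  then show "integrable M (\<lambda>\<omega>. (\<Sum>k\<in>I. a k * c k \<omega>) ^ (2 * m))"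
    and "expectation (\<lambda>\<omega>. (\<Sum>k\<in>I. a k * c k \<omega>) ^ (2 * m))
           = (\<Sum>k\<in>I. (a k)\<^sup>2) ^ m * std_normal_moment m" by simp_all
qed

lemma expectation_L2_01_cosine_sum:
  assumes "finite I" "\<And>k. k \<in> I \<Longrightarrow> 1 \<le> k"
  shows "expectation (\<lambda>\<omega>. (L2_01 (cosine_sum I (\<lambda>k. c k \<omega>)))\<^sup>2) = card I"
proof -
  have "expectation (\<lambda>\<omega>. (L2_01 (cosine_sum I (\<lambda>k. c k \<omega>)))\<^sup>2)
      = expectation (\<lambda>\<omega>. \<Sum>k\<in>I. c k \<omega> ^ (2 * 1))"
    using L2_01_cosine_sum[OF assms] by simp
  also have "\<dots> = (\<Sum>k\<in>I. expectation (\<lambda>\<omega>. c k \<omega> ^ (2 * 1)))"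
    using even_moment(1) by (intro Bochner_Integration.integral_sum)
  also have "\<dots> = (\<Sum>k\<in>I. std_normal_moment 1)"
    using even_moment(2) by (intro sum.cong refl)
  finally show ?thesis by (simp add: std_normal_moment_def)
qed

lemma grid_values_moment_le:
  assumes "finite I"
  shows "integrable M (\<lambda>\<omega>. \<Sum>j\<le>n. cosine_sum I (\<lambda>k. c k \<omega>) (real j / real n) ^ (2 * m))"
    and "expectation (\<lambda>\<omega>. \<Sum>j\<le>n. cosine_sum I (\<lambda>k. c k \<omega>) (real j / real n) ^ (2 * m))
           \<le> (real n + 1) * (2 * real (card I)) ^ m * std_normal_moment m"
proof -
  define a where "a j k = sqrt 2 * cos (real k * pi * (real j / real n))" for j k
  have grid_value: "cosine_sum I (\<lambda>k. c k \<omega>) (real j / real n) = (\<Sum>k\<in>I. a j k * c k \<omega>)" for j \<omega>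
    by (simp add: cosine_sum_def a_def mult_ac)
  have coeff_bound: "(\<Sum>k\<in>I. (a j k)\<^sup>2) ^ m \<le> (2 * real (card I)) ^ m" for j
  proof (intro power_mono)
    have "(a j k)\<^sup>2 \<le> 2" for k
      by (simp add: a_def power_mult_distrib cos_squared_eq)
    then show "(\<Sum>k\<in>I. (a j k)\<^sup>2) \<le> 2 * real (card I)"
      using sum_mono[of I "\<lambda>k. (a j k)\<^sup>2" "\<lambda>_. 2"] by simp
  qed (simp add: sum_nonneg)
  show "integrable M (\<lambda>\<omega>. \<Sum>j\<le>n. cosine_sum I (\<lambda>k. c k \<omega>) (real j / real n) ^ (2 * m))"
    unfolding grid_value using linear_combination_even_moment(1)[OF assms] by auto
  have "expectation (\<lambda>\<omega>. \<Sum>j\<le>n. cosine_sum I (\<lambda>k. c k \<omega>) (real j / real n) ^ (2 * m))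
      = (\<Sum>j\<le>n. (\<Sum>k\<in>I. (a j k)\<^sup>2) ^ m * std_normal_moment m)"
    unfolding grid_value using linear_combination_even_moment[OF assms]
    by (simp add: Bochner_Integration.integral_sum)
  also have "\<dots> \<le> (\<Sum>j\<le>n. (2 * real (card I)) ^ m * std_normal_moment m)"
    using coeff_bound by (intro sum_mono mult_right_mono) (auto simp: std_normal_moment_def)
  finally show "expectation (\<lambda>\<omega>. \<Sum>j\<le>n. cosine_sum I (\<lambda>k. c k \<omega>) (real j / real n) ^ (2 * m))
           \<le> (real n + 1) * (2 * real (card I)) ^ m * std_normal_moment m"
    by (simp add: algebra_simps)
qed

lemma Linf01_cosine_sum_moment_le:
  fixes m :: nat and p :: real
  assumes "finite I" "I \<noteq> {}" "\<And>k. k \<in> I \<Longrightarrow> real k \<le> K" "1 \<le> n" "1 \<le> m" "1 \<le> p" "p \<le> 2 * m"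
  shows "expectation (\<lambda>\<omega>. Linf01 (cosine_sum I (\<lambda>k. c k \<omega>)) powr p) powr (1 / p)
     \<le> 2 * (4 ^ m * std_normal_moment m * ((real n + 1) * (2 * real (card I)) ^ m
              + (sqrt 2 * pi * K * real (card I) / real n) ^ (2 * m) * real (card I))) powr (1 / (2 * m))"
proof -
  define N where "N = real (card I)"
  define S where "S = sqrt 2 * pi * K * N / real n"
  define bound where
    "bound = 4 ^ m * std_normal_moment m * ((real n + 1) * (2 * N) ^ m + S ^ (2 * m) * N)"
  define G where "G \<omega> = 4 ^ m * ((\<Sum>j\<le>n. cosine_sum I (\<lambda>k. c k \<omega>) (real j / real n) ^ (2 * m))
      + S ^ (2 * m) * (\<Sum>k\<in>I. c k \<omega> ^ (2 * m)))" for \<omega>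
  obtain k0 where "k0 \<in> I" using assms(2) by blast
  then have "0 \<le> K" using assms(3) by force
  have "0 < N" using assms(1,2) by (simp add: N_def card_gt_0_iff)
  then have "0 < bound"
    by (simp add: bound_def std_normal_moment_def add_pos_nonneg zero_le_even_power)
  have sum_even_moment: "integrable M (\<lambda>\<omega>. \<Sum>k\<in>I. c k \<omega> ^ (2 * m))"
      "expectation (\<lambda>\<omega>. \<Sum>k\<in>I. c k \<omega> ^ (2 * m)) = N * std_normal_moment m"
    using even_moment by (auto simp: N_def Bochner_Integration.integral_sum)
  have "integrable M G"
    unfolding G_def using grid_values_moment_le(1)[OF assms(1)] sum_even_moment(1) by auto
  moreover have "expectation G \<le> (bound powr (1 / (2 * m))) ^ (2 * m)"
  proof -
    have "expectation G = 4 ^ m *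
        (expectation (\<lambda>\<omega>. \<Sum>j\<le>n. cosine_sum I (\<lambda>k. c k \<omega>) (real j / real n) ^ (2 * m))
         + S ^ (2 * m) * (N * std_normal_moment m))"
      unfolding G_def using grid_values_moment_le(1)[OF assms(1)] sum_even_moment
      by (simp add: N_def)
    also have "\<dots> \<le> 4 ^ m * ((real n + 1) * (2 * N) ^ m * std_normal_moment m
         + S ^ (2 * m) * (N * std_normal_moment m))"
      using grid_values_moment_le(2)[OF assms(1)] by (simp add: N_def)
    also have "\<dots> = (bound powr (1 / (2 * m))) ^ (2 * m)"
      using \<open>0 < bound\<close> assms(5)
      by (simp add: powr_realpow[symmetric] powr_powr bound_def algebra_simps)
    finally show ?thesis .
  qed
  moreover have "0 \<le> Linf01 (cosine_sum I (\<lambda>k. c k \<omega>))"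
      "Linf01 (cosine_sum I (\<lambda>k. c k \<omega>)) ^ (2 * m) \<le> G \<omega>" for \<omega>
    using Linf01_cosine_sum_pow_le[OF assms(1,3) \<open>0 \<le> K\<close> assms(4,5)]
    by (simp_all add: G_def S_def N_def)
  ultimately have "expectation (\<lambda>\<omega>. Linf01 (cosine_sum I (\<lambda>k. c k \<omega>)) powr p) powr (1 / p)
      \<le> 2 * bound powr (1 / (2 * m))"
    using \<open>0 < bound\<close> assms(6,7) by (intro expectation_powr_root_le[where n = "2 * m" and G = G]) auto
  then show ?thesis by (simp add: bound_def S_def N_def)
qed

end

lemma mem_Lam_bounds:
  assumes "0 < \<gamma>" "0 < \<epsilon>" "k \<in> Lam \<gamma> \<epsilon>"
  shows "1 \<le> k" and "real k \<le> 1 / \<epsilon>"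
proof -
  have "sqrt (1 - \<gamma>) < 1" using assms(1) by simp
  then have "0 < alpha_minus \<gamma>" by (simp add: alpha_minus_def)
  then have "0 < \<lceil>alpha_minus \<gamma> / \<epsilon>\<rceil>" using assms(2) by simp
  then have "0 < int k" using assms(3) unfolding Lam_def mem_Collect_eq by linarith
  then show "1 \<le> k" by simp
  have "1 \<le> pi\<^sup>2" using pi_gt3 by (intro one_le_power) simp
  with \<open>sqrt (1 - \<gamma>) < 1\<close> have "1 + sqrt (1 - \<gamma>) \<le> 2 * pi\<^sup>2" by linarith
  then have "alpha_plus \<gamma> \<le> 1" by (simp add: alpha_plus_def)
  then have "alpha_plus \<gamma> / \<epsilon> \<le> 1 / \<epsilon>" using assms(2) by (simp add: divide_right_mono)
  moreover have "real k \<le> alpha_plus \<gamma> / \<epsilon>"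
    using assms(3) unfolding Lam_def mem_Collect_eq by (simp add: le_floor_iff)
  ultimately show "real k \<le> 1 / \<epsilon>" by linarith
qed

lemma Lam_subset:
  assumes "0 < \<gamma>" "0 < \<epsilon>"
  shows "Lam \<gamma> \<epsilon> \<subseteq> {1..nat \<lfloor>1 / \<epsilon>\<rfloor>}"
proof
  fix k assume "k \<in> Lam \<gamma> \<epsilon>"
  with mem_Lam_bounds[OF assms] have "1 \<le> k" "int k \<le> \<lfloor>1 / \<epsilon>\<rfloor>" by (auto simp: le_floor_iff)
  then show "k \<in> {1..nat \<lfloor>1 / \<epsilon>\<rfloor>}" by auto
qed

lemma finite_Lam: "0 < \<gamma> \<Longrightarrow> 0 < \<epsilon> \<Longrightarrow> finite (Lam \<gamma> \<epsilon>)"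
  using Lam_subset finite_subset by blast

lemma card_Lam_le:
  assumes "0 < \<gamma>" "0 < \<epsilon>"
  shows "real (card (Lam \<gamma> \<epsilon>)) \<le> 1 / \<epsilon>"
proof -
  have "card (Lam \<gamma> \<epsilon>) \<le> nat \<lfloor>1 / \<epsilon>\<rfloor>" using card_mono[OF _ Lam_subset[OF assms]] by simp
  then have "real (card (Lam \<gamma> \<epsilon>)) \<le> real (nat \<lfloor>1 / \<epsilon>\<rfloor>)" by linarith
  also have "\<dots> \<le> 1 / \<epsilon>" using assms(2) by (simp add: of_nat_nat)
  finally show ?thesis .
qed

lemma nat_ceiling_bounds:
  assumes "1 \<le> x"
  shows "x \<le> real (nat \<lceil>x\<rceil>)" and "real (nat \<lceil>x\<rceil>) + 1 \<le> 3 * x"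
proof -
  have "real (nat \<lceil>x\<rceil>) = of_int \<lceil>x\<rceil>" using assms by simp
  then show "x \<le> real (nat \<lceil>x\<rceil>)" "real (nat \<lceil>x\<rceil>) + 1 \<le> 3 * x"
    using assms le_of_int_ceiling[of x] of_int_ceiling_le_add_one[of x] by linarith+
qed

lemma sqrt_2_times_pi_le: "sqrt 2 * pi \<le> 5"
proof -
  have "sqrt 2 \<le> 3 / 2" by (rule real_le_lsqrt) (auto simp: power2_eq_square)
  then have "sqrt 2 * pi \<le> 3 / 2 * (10 / 3)"
    using pi_approx by (intro mult_mono) auto
  then show ?thesis by simp
qed

lemma grid_moment_bound_le:
  fixes \<epsilon> N :: real and m :: nat
  assumes "0 < \<epsilon>" "\<epsilon> \<le> 1" "1 \<le> N" "N \<le> 1 / \<epsilon>" "1 \<le> m"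
  defines "n \<equiv> nat \<lceil>1 / \<epsilon>\<^sup>2\<rceil>"
  shows "(real n + 1) * (2 * N) ^ m + (sqrt 2 * pi * (1 / \<epsilon>) * N / real n) ^ (2 * m) * N
    \<le> (3 * 2 ^ m + 5 ^ (2 * m)) * N ^ m / \<epsilon>\<^sup>2"
proof -
  have "1 \<le> 1 / \<epsilon>\<^sup>2" using assms(1,2) by (simp add: power_le_one)
  then have n: "1 / \<epsilon>\<^sup>2 \<le> real n" "real n + 1 \<le> 3 / \<epsilon>\<^sup>2"
    using nat_ceiling_bounds[of "1 / \<epsilon>\<^sup>2"] by (simp_all add: n_def)
  note sqrt_2_times_pi_le
  moreover have "(1 / \<epsilon>) * N / real n \<le> 1"
  proof -
    have "(1 / \<epsilon>) * N \<le> (1 / \<epsilon>) * (1 / \<epsilon>)" using assms(1,4) by (intro mult_left_mono) auto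
    also have "\<dots> \<le> real n" using n(1) by (simp add: power2_eq_square)
    finally have "(1 / \<epsilon>) * N \<le> real n" .
    moreover have "0 < real n" using n(1) \<open>1 \<le> 1 / \<epsilon>\<^sup>2\<close> by linarith
    ultimately show ?thesis by (subst pos_divide_le_eq) auto
  qed
  ultimately have "sqrt 2 * pi * ((1 / \<epsilon>) * N / real n) \<le> 5 * 1"
    using assms(1,3) by (intro mult_mono) auto
  then have "sqrt 2 * pi * (1 / \<epsilon>) * N / real n \<le> 5" by simp
  then have "(sqrt 2 * pi * (1 / \<epsilon>) * N / real n) ^ (2 * m) \<le> 5 ^ (2 * m)"
    using assms(1,3) by (intro power_mono) auto
  moreover have "N \<le> N ^ m / \<epsilon>\<^sup>2"
  proof -
    have "N \<le> N ^ m" using power_increasing[OF assms(5,3)] by simp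
    also have "\<dots> \<le> N ^ m * (1 / \<epsilon>\<^sup>2)"
      using mult_left_mono[OF \<open>1 \<le> 1 / \<epsilon>\<^sup>2\<close>, of "N ^ m"] assms(3) by simp
    finally show ?thesis by simp
  qed
  ultimately have "(sqrt 2 * pi * (1 / \<epsilon>) * N / real n) ^ (2 * m) * N \<le> 5 ^ (2 * m) * (N ^ m / \<epsilon>\<^sup>2)"
    using assms(3) by (intro mult_mono) auto
  moreover have "(real n + 1) * (2 * N) ^ m \<le> 3 / \<epsilon>\<^sup>2 * (2 * N) ^ m"
    using n(2) assms(3) by (intro mult_right_mono) auto
  ultimately have "(real n + 1) * (2 * N) ^ m + (sqrt 2 * pi * (1 / \<epsilon>) * N / real n) ^ (2 * m) * N
      \<le> 3 / \<epsilon>\<^sup>2 * (2 * N) ^ m + 5 ^ (2 * m) * (N ^ m / \<epsilon>\<^sup>2)"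
    by (rule add_mono[rotated])
  also have "\<dots> = (3 * 2 ^ m + 5 ^ (2 * m)) * N ^ m / \<epsilon>\<^sup>2"
    by (simp add: power_mult_distrib add_divide_distrib distrib_right)
  finally show ?thesis .
qed

lemma sqrt_card_Lam_le:
  assumes "0 < \<gamma>" "0 < \<epsilon>"
  shows "sqrt (card (Lam \<gamma> \<epsilon>)) \<le> \<epsilon> powr (- 1 / 2)"
proof -
  have "sqrt (card (Lam \<gamma> \<epsilon>)) \<le> sqrt (1 / \<epsilon>)" using card_Lam_le[OF assms] by simp
  also have "\<dots> = \<epsilon> powr (- 1 / 2)"
    using assms(2) by (simp add: powr_minus_divide powr_half_sqrt real_sqrt_divide)
  finally show ?thesis .
qed

text \<open>The factor \<open>4 ^ m\<close> comes from splitting off the Lipschitz error, \<open>3 * 2 ^ m\<close> from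
  at most \<open>3 / \<epsilon>\<^sup>2\<close> grid values of variance at most \<open>2 |\<Lambda>|\<close>, \<open>5 ^ (2 * m)\<close> from the Lipschitz
  error itself, and the leading \<open>2\<close> from truncation.\<close>

definition sup_moment_constant :: "nat \<Rightarrow> real" where
  "sup_moment_constant m = 2 * (4 ^ m * std_normal_moment m * (3 * 2 ^ m + 5 ^ (2 * m))) powr (1 / (2 * m))"

lemma sup_moment_constant_pos: "0 < sup_moment_constant m"
proof -
  have "0 < (3::real) * 2 ^ m + 5 ^ (2 * m)" by (intro add_pos_pos) auto
  then show ?thesis using std_normal_moment_pos[of m] by (simp add: sup_moment_constant_def)
qed

lemma powr_root_of_moment_bound:
  fixes K N \<epsilon> :: real and m :: nat
  assumes "0 < K" "0 \<le> N" "0 < \<epsilon>" "1 \<le> m"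
  shows "(K * N ^ m / \<epsilon>\<^sup>2) powr (1 / (2 * m)) = K powr (1 / (2 * m)) * \<epsilon> powr (- 1 / m) * sqrt N"
proof -
  have root_N: "(N ^ m) powr (1 / (2 * m)) = sqrt N"
  proof (cases "N = 0")
    case False
    then have "(N ^ m) powr (1 / (2 * m)) = N powr (real m * (1 / (2 * m)))"
      using assms(2) by (subst powr_realpow[symmetric]) (auto simp: powr_powr)
    also have "\<dots> = N powr (1 / 2)" using assms(4) by simp
    finally show ?thesis using assms(2) by (simp add: powr_half_sqrt)
  qed (use assms(4) in simp)
  have "\<epsilon>\<^sup>2 = \<epsilon> powr 2" using assms(3) by (simp add: powr_numeral)
  then have root_eps: "(\<epsilon>\<^sup>2) powr (1 / (2 * m)) = \<epsilon> powr (1 / m)"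
    by (simp add: powr_powr)
  have "(K * N ^ m / \<epsilon>\<^sup>2) powr (1 / (2 * m))
      = K powr (1 / (2 * m)) * (N ^ m) powr (1 / (2 * m)) / (\<epsilon>\<^sup>2) powr (1 / (2 * m))"
    using assms(1,2) by (simp add: powr_mult powr_divide)
  then show ?thesis unfolding root_N root_eps by (simp add: powr_minus_divide)
qed

lemma grid_moment_bound_root_le:
  fixes \<epsilon> N :: real and m :: nat
  assumes "0 < \<epsilon>" "\<epsilon> \<le> 1" "1 \<le> N" "N \<le> 1 / \<epsilon>" "1 \<le> m"
  defines "n \<equiv> nat \<lceil>1 / \<epsilon>\<^sup>2\<rceil>"
  shows "2 * (4 ^ m * std_normal_moment m * ((real n + 1) * (2 * N) ^ m
            + (sqrt 2 * pi * (1 / \<epsilon>) * N / real n) ^ (2 * m) * N)) powr (1 / (2 * m))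
    \<le> sup_moment_constant m * \<epsilon> powr (- 1 / m) * sqrt N"
proof -
  define K where "K = 4 ^ m * std_normal_moment m * (3 * 2 ^ m + 5 ^ (2 * m))"
  define X where "X = (real n + 1) * (2 * N) ^ m + (sqrt 2 * pi * (1 / \<epsilon>) * N / real n) ^ (2 * m) * N"
  have "0 < K" unfolding K_def using std_normal_moment_pos by (intro mult_pos_pos add_pos_pos) auto
  have "0 \<le> X"
    using assms(3) by (auto simp: X_def zero_le_even_power intro!: add_nonneg_nonneg mult_nonneg_nonneg)
  have "X \<le> (3 * 2 ^ m + 5 ^ (2 * m)) * N ^ m / \<epsilon>\<^sup>2"
    unfolding X_def n_def using assms(1-5) by (rule grid_moment_bound_le)
  then have "4 ^ m * std_normal_moment m * X \<le> 4 ^ m * std_normal_moment m * ((3 * 2 ^ m + 5 ^ (2 * m)) * N ^ m / \<epsilon>\<^sup>2)"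
    using std_normal_moment_pos[of m] by (intro mult_left_mono) auto
  also have "\<dots> = K * N ^ m / \<epsilon>\<^sup>2" by (simp add: K_def)
  finally have "(4 ^ m * std_normal_moment m * X) powr (1 / (2 * m)) \<le> (K * N ^ m / \<epsilon>\<^sup>2) powr (1 / (2 * m))"
    using \<open>0 \<le> X\<close> std_normal_moment_pos[of m] by (intro powr_mono2) auto
  also have "\<dots> = K powr (1 / (2 * m)) * \<epsilon> powr (- 1 / m) * sqrt N"
    using \<open>0 < K\<close> assms(1,3,5) by (intro powr_root_of_moment_bound) auto
  finally show ?thesis
    unfolding X_def sup_moment_constant_def K_def by (simp only: mult.assoc of_nat_mult of_nat_numeral)
qed

lemma Linf01_rand_f_moment_le:
  fixes m :: nat and p :: real
  assumes "std_normal_family M c (Lam \<gamma> \<epsilon>)" "0 < \<gamma>" "0 < \<epsilon>" "\<epsilon> \<le> 1" "1 \<le> m" "1 \<le> p" "p \<le> 2 * m"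
  shows "prob_space.expectation M (\<lambda>\<omega>. Linf01 (rand_f \<gamma> \<epsilon> c \<omega>) powr p) powr (1 / p)
    \<le> sup_moment_constant m * \<epsilon> powr (- 1 / m) * sqrt (card (Lam \<gamma> \<epsilon>))"
proof -
  interpret std_normal_family M c "Lam \<gamma> \<epsilon>" by fact
  show ?thesis
  proof (cases "Lam \<gamma> \<epsilon> = {}")
    case True
    have "Linf01 (rand_f \<gamma> \<epsilon> c \<omega>) = 0" for \<omega> using True by (simp add: rand_f_def Linf01_def)
    then show ?thesis using True by simp
  next
    case False
    define n where "n = nat \<lceil>1 / \<epsilon>\<^sup>2\<rceil>"
    have fin: "finite (Lam \<gamma> \<epsilon>)" using assms(2,3) by (rule finite_Lam)
    then have "1 \<le> real (card (Lam \<gamma> \<epsilon>))" using False by (simp add: Suc_le_eq card_gt_0_iff)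
    have "1 \<le> \<lceil>1 / \<epsilon>\<^sup>2\<rceil>" using assms(3) by simp
    then have "1 \<le> n" unfolding n_def by (simp add: le_nat_iff del: one_le_ceiling)
    have "expectation (\<lambda>\<omega>. Linf01 (cosine_sum (Lam \<gamma> \<epsilon>) (\<lambda>k. c k \<omega>)) powr p) powr (1 / p)
        \<le> 2 * (4 ^ m * std_normal_moment m * ((real n + 1) * (2 * real (card (Lam \<gamma> \<epsilon>))) ^ m
              + (sqrt 2 * pi * (1 / \<epsilon>) * real (card (Lam \<gamma> \<epsilon>)) / real n) ^ (2 * m)
                * real (card (Lam \<gamma> \<epsilon>)))) powr (1 / (2 * m))"
      using mem_Lam_bounds(2)[OF assms(2,3)]
      by (intro Linf01_cosine_sum_moment_le[OF fin False _ \<open>1 \<le> n\<close> assms(5-7)])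
    also have "\<dots> \<le> sup_moment_constant m * \<epsilon> powr (- 1 / m) * sqrt (card (Lam \<gamma> \<epsilon>))"
      unfolding n_def using card_Lam_le[OF assms(2,3)]
      by (intro grid_moment_bound_root_le[OF assms(3,4) \<open>1 \<le> real (card (Lam \<gamma> \<epsilon>))\<close> _ assms(5)])
    finally show ?thesis unfolding rand_f_eq_cosine_sum .
  qed
qed

lemma exponent_choice:
  fixes p \<delta> :: real
  assumes "1 < p" "0 < \<delta>"
  obtains m :: nat where "1 \<le> m" "p \<le> 2 * m" "- \<delta> / 2 \<le> - 1 / m"
proof -
  define m where "m = nat \<lceil>p + 2 / \<delta>\<rceil>"
  have "p + 2 / \<delta> \<le> m" unfolding m_def by linarith
  moreover have "0 < 2 / \<delta>" using assms(2) by simp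
  ultimately have "1 < real m" "p \<le> 2 * m" "2 / \<delta> \<le> m" using assms(1) by linarith+
  then have "1 \<le> m" "p \<le> 2 * m" "- \<delta> / 2 \<le> - 1 / m"
    using assms(2) by (auto simp: field_simps)
  then show ?thesis by (rule that)
qed

lemma rand_f_moment_bounds:
  fixes m :: nat and p :: real
  assumes "0 < \<gamma>" "0 < \<epsilon>" "\<epsilon> \<le> 1" "1 \<le> m" "1 \<le> p" "p \<le> 2 * m" "- \<delta> / 2 \<le> - 1 / m"
    and "prob_space M" "prob_space.indep_vars M (\<lambda>_. borel) c (Lam \<gamma> \<epsilon>)"
    and "\<forall>k\<in>Lam \<gamma> \<epsilon>. distributed M lborel (c k) std_normal_density"
  shows "prob_space.expectation M (\<lambda>\<omega>. Linf01 (rand_f \<gamma> \<epsilon> c \<omega>) powr p) powr (1 / p)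
      \<le> sup_moment_constant m * \<epsilon> powr (- \<delta> / 2)
         * sqrt (prob_space.expectation M (\<lambda>\<omega>. (L2_01 (rand_f \<gamma> \<epsilon> c \<omega>))\<^sup>2))"
    and "prob_space.expectation M (\<lambda>\<omega>. Linf01 (rand_f \<gamma> \<epsilon> c \<omega>) powr p) powr (1 / p)
      \<le> sup_moment_constant m * \<epsilon> powr (- (1 + \<delta>) / 2)"
proof -
  have family: "std_normal_family M c (Lam \<gamma> \<epsilon>)"
    using assms(8-10) by (simp add: std_normal_family_def std_normal_family_axioms_def)
  then interpret std_normal_family M c "Lam \<gamma> \<epsilon>" .
  define C where "C = sup_moment_constant m"
  have "0 < C" by (simp add: C_def sup_moment_constant_pos)
  have "expectation (\<lambda>\<omega>. Linf01 (rand_f \<gamma> \<epsilon> c \<omega>) powr p) powr (1 / p)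
      \<le> C * \<epsilon> powr (- 1 / m) * sqrt (card (Lam \<gamma> \<epsilon>))"
    using Linf01_rand_f_moment_le[OF family assms(1-6)] by (simp add: C_def)
  also have "\<dots> \<le> C * \<epsilon> powr (- \<delta> / 2) * sqrt (card (Lam \<gamma> \<epsilon>))"
    using assms(2,3,7) \<open>0 < C\<close> by (intro mult_right_mono mult_left_mono powr_mono') auto
  finally have moment: "expectation (\<lambda>\<omega>. Linf01 (rand_f \<gamma> \<epsilon> c \<omega>) powr p) powr (1 / p)
      \<le> C * \<epsilon> powr (- \<delta> / 2) * sqrt (card (Lam \<gamma> \<epsilon>))" .
  have "expectation (\<lambda>\<omega>. (L2_01 (rand_f \<gamma> \<epsilon> c \<omega>))\<^sup>2) = card (Lam \<gamma> \<epsilon>)"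
    unfolding rand_f_eq_cosine_sum using assms(1,2)
    by (intro expectation_L2_01_cosine_sum finite_Lam mem_Lam_bounds(1)) auto
  with moment show "expectation (\<lambda>\<omega>. Linf01 (rand_f \<gamma> \<epsilon> c \<omega>) powr p) powr (1 / p)
      \<le> sup_moment_constant m * \<epsilon> powr (- \<delta> / 2)
         * sqrt (expectation (\<lambda>\<omega>. (L2_01 (rand_f \<gamma> \<epsilon> c \<omega>))\<^sup>2))"
    by (simp add: C_def)
  have "C * \<epsilon> powr (- \<delta> / 2) * sqrt (card (Lam \<gamma> \<epsilon>)) \<le> C * \<epsilon> powr (- \<delta> / 2) * \<epsilon> powr (- 1 / 2)"
    using sqrt_card_Lam_le[OF assms(1,2)] \<open>0 < C\<close> by (intro mult_left_mono) auto
  also have "\<dots> = C * \<epsilon> powr (- (1 + \<delta>) / 2)"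
    unfolding mult.assoc powr_add[symmetric] by (simp add: field_simps)
  finally show "expectation (\<lambda>\<omega>. Linf01 (rand_f \<gamma> \<epsilon> c \<omega>) powr p) powr (1 / p)
      \<le> sup_moment_constant m * \<epsilon> powr (- (1 + \<delta>) / 2)"
    using moment by (simp add: C_def)
qed

theorem corollary2p5:
  fixes \<gamma> :: real
  assumes "0 < \<gamma>" "\<gamma> < 1"
  shows "\<forall>p>1. \<forall>\<delta>>0. \<exists>C>0. \<forall>\<epsilon>. 0 < \<epsilon> \<and> \<epsilon> \<le> 1 \<longrightarrow>
     (\<forall>(M :: 'a measure) (c :: nat \<Rightarrow> 'a \<Rightarrow> real).
        prob_space M \<and>
        prob_space.indep_vars M (\<lambda>_. borel) c (Lam \<gamma> \<epsilon>) \<and>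
        (\<forall>k\<in>Lam \<gamma> \<epsilon>. distributed M lborel (c k) std_normal_density) \<longrightarrow>
        (prob_space.expectation M (\<lambda>\<omega>. Linf01 (rand_f \<gamma> \<epsilon> c \<omega>) powr p)) powr (1 / p)
          \<le> C * \<epsilon> powr (- \<delta> / 2)
             * sqrt (prob_space.expectation M (\<lambda>\<omega>. (L2_01 (rand_f \<gamma> \<epsilon> c \<omega>))\<^sup>2))
        \<and> (prob_space.expectation M (\<lambda>\<omega>. Linf01 (rand_f \<gamma> \<epsilon> c \<omega>) powr p)) powr (1 / p)
          \<le> C * \<epsilon> powr (- (1 + \<delta>) / 2))"
proof (intro allI impI, goal_cases)
  case (1 p \<delta>)
  then obtain m :: nat where m: "1 \<le> m" "p \<le> 2 * m" "- \<delta> / 2 \<le> - 1 / m"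
    by (rule exponent_choice)
  show ?case
    using m less_imp_le[OF \<open>1 < p\<close>] assms(1)
    by (intro exI[of _ "sup_moment_constant m"] conjI sup_moment_constant_pos allI impI rand_f_moment_bounds)
      blast+
qed

end
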